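(* Let $\alpha,\beta,\gamma,\delta,\epsilon,\zeta,\kappa,\lambda,\mu,b,c,f,m$ be parameters, and let $$A_0=\begin{pmatrix}\alpha&\beta&\gamma\\\delta&\epsilon&\zeta\\\kappa&\lambda&\mu\end{pmatrix},\qquad A_1=\begin{pmatrix}\alpha_1&\beta_1&\gamma_1\\\delta_1&\epsilon_1&\zeta_1\\\kappa_1&\lambda_1&\mu_1\end{pmatrix},$$ where $\alpha_1=2\alpha^2f-c\alpha\delta+\beta\delta b-b\alpha\epsilon$, $\beta_1=2f\alpha\beta+b\gamma\delta-c\alpha\epsilon-b\alpha\zeta$, $\gamma_1=2f\alpha\gamma-c\alpha\zeta$, $\delta_1=2m\alpha^2-2c\alpha\kappa+2b\beta\kappa-2b\alpha\lambda$, $\epsilon_1=2m\alpha\beta+2b\gamma\kappa-2c\alpha\lambda-2b\alpha\mu$, $\zeta_1=2m\alpha\gamma-2c\alpha\mu$, $\kappa_1=m\alpha\delta-2f\alpha\kappa+b\epsilon\kappa-b\delta\lambda$, $\lambda_1=m\alpha\epsilon+b\zeta\kappa-2f\alpha\lambda-b\delta\mu$, $\mu_1=m\alpha\zeta-2f\alpha\mu$. Put $\mathbf{X}=(x^2,x,1)^T$, $\mathbf{Y}=(y^2,y,1)^T$ and $I(x,y)=\dfrac{\mathbf{X}^TA_0\mathbf{Y}}{\mathbf{X}^TA_1\mathbf{Y}}$. Define $(g_1(x),g_2(x),g_3(x))^T=(A_0^T\mathbf{X})\times(A_1^T\mathbf{X})$ and the maps $$i_2:(x,y)\mapsto\left(x,\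 \frac{g_1(x)-g_2(x)y}{g_2(x)-g_3(x)y}\right),$$ $$h_1:(x,y)\mapsto\left(-\frac{(\delta y^2+\epsilon y+\zeta)x+2(\kappa y^2+\lambda y+\mu)}{2(\alpha y^2+\beta y+\gamma)x+\delta y^2+\epsilon y+\zeta},\ y\right),$$ $$h_2:(x,y)\mapsto\left(-\frac{(\delta_1 y^2+\epsilon_1 y+\zeta_1)x+2(\kappa_1 y^2+\lambda_1 y+\mu_1)}{2(\alpha_1 y^2+\beta_1 y+\gamma_1)x+\delta_1 y^2+\epsilon_1 y+\zeta_1},\ y\right).$$ Then $I\circ i_2=I$, $I\circ h_1=-I$ and $I\circ h_2=-I$.
   Context: $\times$ denotes the cross product of vectors in three-dimensional space; the entries of $(A_0^T\mathbf{X})\times(A_1^T\mathbf{X})$ are polynomials in $x$. *)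

theory Defs
  imports "HOL-Analysis.Analysis"
begin

definition A0 :: "real \<Rightarrow> real \<Rightarrow> real \<Rightarrow> real \<Rightarrow> real \<Rightarrow> real \<Rightarrow> real \<Rightarrow> real \<Rightarrow> real \<Rightarrow> real^3^3" where
  "A0 \<alpha> \<beta> \<gamma> \<delta> \<epsilon> \<zeta> \<kappa> lam \<mu> =
     vector [vector [\<alpha>, \<beta>, \<gamma>], vector [\<delta>, \<epsilon>, \<zeta>], vector [\<kappa>, lam, \<mu>]]"

definition A1 :: "real \<Rightarrow> real \<Rightarrow> real \<Rightarrow> real \<Rightarrow> real \<Rightarrow> real \<Rightarrow> real \<Rightarrow> real \<Rightarrow> real \<Rightarrow>
                  real \<Rightarrow> real \<Rightarrow> real \<Rightarrow> real \<Rightarrow> real^3^3" where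
  "A1 \<alpha> \<beta> \<gamma> \<delta> \<epsilon> \<zeta> \<kappa> lam \<mu> b c f m =
     vector [
       vector [2*\<alpha>^2*f - c*\<alpha>*\<delta> + \<beta>*\<delta>*b - b*\<alpha>*\<epsilon>,
               2*f*\<alpha>*\<beta> + b*\<gamma>*\<delta> - c*\<alpha>*\<epsilon> - b*\<alpha>*\<zeta>,
               2*f*\<alpha>*\<gamma> - c*\<alpha>*\<zeta>],
       vector [2*m*\<alpha>^2 - 2*c*\<alpha>*\<kappa> + 2*b*\<beta>*\<kappa> - 2*b*\<alpha>*lam,
               2*m*\<alpha>*\<beta> + 2*b*\<gamma>*\<kappa> - 2*c*\<alpha>*lam - 2*b*\<alpha>*\<mu>,
               2*m*\<alpha>*\<gamma> - 2*c*\<alpha>*\<mu>],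
       vector [m*\<alpha>*\<delta> - 2*f*\<alpha>*\<kappa> + b*\<epsilon>*\<kappa> - b*\<delta>*lam,
               m*\<alpha>*\<epsilon> + b*\<zeta>*\<kappa> - 2*f*\<alpha>*lam - b*\<delta>*\<mu>,
               m*\<alpha>*\<zeta> - 2*f*\<alpha>*\<mu>]]"

definition quadvec :: "real \<Rightarrow> real^3" where
  "quadvec t = vector [t^2, t, 1]"

definition bform :: "real^3^3 \<Rightarrow> real \<Rightarrow> real \<Rightarrow> real" where
  "bform A x y = quadvec x \<bullet> (A *v quadvec y)"

definition Ifun :: "real^3^3 \<Rightarrow> real^3^3 \<Rightarrow> real \<times> real \<Rightarrow> real" where
  "Ifun M0 M1 p = bform M0 (fst p) (snd p) / bform M1 (fst p) (snd p)"

definition gvec :: "real^3^3 \<Rightarrow> real^3^3 \<Rightarrow> real \<Rightarrow> real^3" where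
  "gvec M0 M1 x = cross3 (transpose M0 *v quadvec x) (transpose M1 *v quadvec x)"

definition i2 :: "real^3^3 \<Rightarrow> real^3^3 \<Rightarrow> real \<times> real \<Rightarrow> real \<times> real" where
  "i2 M0 M1 p = (let x = fst p; y = snd p; g = gvec M0 M1 x in
      (x, (g$1 - g$2 * y) / (g$2 - g$3 * y)))"

definition hden :: "real^3^3 \<Rightarrow> real \<times> real \<Rightarrow> real" where
  "hden A p = (let x = fst p; y = snd p in
      2 * (A$1$1 * y^2 + A$1$2 * y + A$1$3) * x + (A$2$1 * y^2 + A$2$2 * y + A$2$3))"

text \<open>The map h built from a matrix A; h1 = hmap A0, h2 = hmap A1.\<close>
definition hmap :: "real^3^3 \<Rightarrow> real \<times> real \<Rightarrow> real \<times> real" where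
  "hmap A p = (let x = fst p; y = snd p in
      (- ((A$2$1 * y^2 + A$2$2 * y + A$2$3) * x + 2 * (A$3$1 * y^2 + A$3$2 * y + A$3$3))
         / hden A p, y))"

end

theory Submission
  imports Defs
begin

text \<open>
  For fixed \<open>x\<close>, \<open>I\<close> is the ratio of two quadratics in \<open>y\<close> with coefficient vectors
  \<open>u = A\<^sub>0\<^sup>T X\<close> and \<open>v = A\<^sub>1\<^sup>T X\<close>. The member \<open>(v\<cdot>Y) u - (u\<cdot>Y) v\<close> of their pencil vanishes
  at \<open>y\<close>, and \<open>i\<^sub>2\<close>, built from \<open>u \<times> v\<close>, sends \<open>y\<close> to its other root; hence the ratio is
  the same at both points.

  For fixed \<open>y\<close>, \<open>I\<close> is the ratio of two quadratics in \<open>x\<close>, and the choice of \<open>A\<^sub>1\<close> makes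
  them apolar. \<open>h\<^sub>1\<close> (resp. \<open>h\<^sub>2\<close>) sends \<open>x\<close> to its harmonic conjugate with respect to the
  roots of the numerator (resp. denominator); this multiplies that quadratic by \<open>-disc/D\<^sup>2\<close>
  and, by apolarity, the other one by \<open>disc/D\<^sup>2\<close>, so the ratio changes sign.
\<close>

lemma inner_quadvec: "u \<bullet> quadvec t = u$1 * t^2 + u$2 * t + u$3"
  by (simp add: quadvec_def inner_vec_def sum_3)

lemma inner_quadvec_divide:
  fixes N D :: real
  assumes "D \<noteq> 0"
  shows "(u \<bullet> quadvec (N / D)) * D^2 = u$1 * N^2 + u$2 * N * D + u$3 * D^2"
  using assms by (simp add: inner_quadvec field_simps power2_eq_square)

lemma matrix_vector_quadvec_nth: "(A *v quadvec y) $ i = A$i$1 * y^2 + A$i$2 * y + A$i$3"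
  by (simp add: matrix_vector_mult_def quadvec_def sum_3 mult.commute)

lemma bform_eq_inner: "bform A x y = (A *v quadvec y) \<bullet> quadvec x"
  by (simp add: bform_def inner_commute)

lemma bform_transpose: "bform A x y = (transpose A *v quadvec x) \<bullet> quadvec y"
  by (simp add: bform_def dot_lmul_matrix)

lemma cross3_involution_cross_ratio:
  fixes u v :: "real^3"
  defines "w \<equiv> cross3 u v"
  assumes D: "w$2 - w$3 * y \<noteq> 0"
  shows "(u \<bullet> quadvec ((w$1 - w$2 * y) / (w$2 - w$3 * y))) * (v \<bullet> quadvec y)
       = (v \<bullet> quadvec ((w$1 - w$2 * y) / (w$2 - w$3 * y))) * (u \<bullet> quadvec y)"
proof -
  define N where "N = w$1 - w$2 * y"
  define E where "E = w$2 - w$3 * y"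
  have E: "E \<noteq> 0" using D E_def by simp
  have "(u$1 * N^2 + u$2 * N * E + u$3 * E^2) * (v \<bullet> quadvec y)
      = (v$1 * N^2 + v$2 * N * E + v$3 * E^2) * (u \<bullet> quadvec y)"
    unfolding N_def E_def w_def
    by (simp add: inner_quadvec cross3_def vector_def algebra_simps power2_eq_square)
  then have "((u \<bullet> quadvec (N / E)) * E^2) * (v \<bullet> quadvec y)
           = ((v \<bullet> quadvec (N / E)) * E^2) * (u \<bullet> quadvec y)"
    unfolding inner_quadvec_divide[OF E] .
  then have "((u \<bullet> quadvec (N / E)) * (v \<bullet> quadvec y)) * E^2
           = ((v \<bullet> quadvec (N / E)) * (u \<bullet> quadvec y)) * E^2"
    by (simp only: ac_simps)
  then show ?thesis
    using E unfolding N_def E_def by simp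
qed

lemma cross3_involution_ratio:
  fixes u v :: "real^3"
  defines "w \<equiv> cross3 u v"
  assumes "w$2 - w$3 * y \<noteq> 0" and "v \<bullet> quadvec y \<noteq> 0"
    and "v \<bullet> quadvec ((w$1 - w$2 * y) / (w$2 - w$3 * y)) \<noteq> 0"
  shows "(u \<bullet> quadvec ((w$1 - w$2 * y) / (w$2 - w$3 * y)))
           / (v \<bullet> quadvec ((w$1 - w$2 * y) / (w$2 - w$3 * y)))
       = (u \<bullet> quadvec y) / (v \<bullet> quadvec y)"
  using cross3_involution_cross_ratio[of u v y] assms by (simp add: divide_simps)

text \<open>The polar form \<open>2 u\<^sub>1 a b + u\<^sub>2 (a + b) + 2 u\<^sub>3\<close> of \<open>u\<close>
  vanishes at \<open>(t, harmonic_conj u t)\<close>: the image is the harmonic conjugate of \<open>t\<close> with respect to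
  the roots of \<open>u\<close>.\<close>

definition harmonic_conj :: "real^3 \<Rightarrow> real \<Rightarrow> real" where
  "harmonic_conj u t = - (u$2 * t + 2 * u$3) / (2 * u$1 * t + u$2)"

definition apolar_form :: "real^3 \<Rightarrow> real^3 \<Rightarrow> real" where
  "apolar_form u v = 2 * u$1 * v$3 + 2 * v$1 * u$3 - u$2 * v$2"

lemma apolar_form_commute: "apolar_form u v = apolar_form v u"
  by (simp add: apolar_form_def algebra_simps)

lemma inner_quadvec_harmonic_conj:
  assumes D: "2 * u$1 * t + u$2 \<noteq> 0"
  shows "(v \<bullet> quadvec (harmonic_conj u t)) * (2 * u$1 * t + u$2)^2
       = 2 * (u \<bullet> quadvec t) * apolar_form u v - apolar_form u u * (v \<bullet> quadvec t)"
  using inner_quadvec_divide[OF D, of v "- (u$2 * t + 2 * u$3)"]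
  unfolding harmonic_conj_def apolar_form_def inner_quadvec
  by (simp add: algebra_simps power2_eq_square)

lemma divide_eq_minus_of_rescaled:
  fixes a b a' b' k D :: real
  assumes "a' * D^2 = k * a" "b' * D^2 = - k * b" "b' \<noteq> 0" "D \<noteq> 0"
  shows "a' / b' = - (a / b)"
proof -
  have "k \<noteq> 0"
  proof
    assume "k = 0"
    then have "b' * D^2 = 0" using assms(2) by simp
    then show False using assms(3,4) by simp
  qed
  have "a' / b' = (a' * D^2) / (b' * D^2)"
    using assms(4) by simp
  also have "\<dots> = (k * a) / (- k * b)"
    unfolding assms(1,2) ..
  also have "\<dots> = - (a / b)"
    using \<open>k \<noteq> 0\<close> by simp
  finally show ?thesis .
qed

lemma harmonic_conj_ratio:
  assumes "apolar_form u v = 0" "2 * u$1 * t + u$2 \<noteq> 0" "v \<bullet> quadvec (harmonic_conj u t) \<noteq> 0"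
  shows "(u \<bullet> quadvec (harmonic_conj u t)) / (v \<bullet> quadvec (harmonic_conj u t))
       = - ((u \<bullet> quadvec t) / (v \<bullet> quadvec t))"
  using assms inner_quadvec_harmonic_conj[OF assms(2), of u] inner_quadvec_harmonic_conj[OF assms(2), of v]
  by (intro divide_eq_minus_of_rescaled[of _ _ "apolar_form u u"]) (simp_all add: algebra_simps)

lemma harmonic_conj_ratio':
  assumes "apolar_form u v = 0" "2 * u$1 * t + u$2 \<noteq> 0" "u \<bullet> quadvec (harmonic_conj u t) \<noteq> 0"
  shows "(v \<bullet> quadvec (harmonic_conj u t)) / (u \<bullet> quadvec (harmonic_conj u t))
       = - ((v \<bullet> quadvec t) / (u \<bullet> quadvec t))"
  using assms inner_quadvec_harmonic_conj[OF assms(2), of u] inner_quadvec_harmonic_conj[OF assms(2), of v]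
  by (intro divide_eq_minus_of_rescaled[of _ _ "- apolar_form u u"]) (simp_all add: algebra_simps)

lemma hden_eq: "hden A (x, y) = 2 * (A *v quadvec y)$1 * x + (A *v quadvec y)$2"
  by (simp add: hden_def matrix_vector_quadvec_nth)

lemma hmap_eq: "hmap A (x, y) = (harmonic_conj (A *v quadvec y) x, y)"
  by (simp add: hmap_def hden_def harmonic_conj_def matrix_vector_quadvec_nth)

lemma A0_A1_apolar:
  "apolar_form (A0 \<alpha> \<beta> \<gamma> \<delta> \<epsilon> \<zeta> \<kappa> lam \<mu> *v quadvec y)
               (A1 \<alpha> \<beta> \<gamma> \<delta> \<epsilon> \<zeta> \<kappa> lam \<mu> b c f m *v quadvec y) = 0"
  by (simp add: apolar_form_def matrix_vector_quadvec_nth A0_def A1_def algebra_simps power2_eq_square)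

theorem proposition2:
  fixes \<alpha> \<beta> \<gamma> \<delta> \<epsilon> \<zeta> \<kappa> lam \<mu> b c f m :: real
  defines "M0 \<equiv> A0 \<alpha> \<beta> \<gamma> \<delta> \<epsilon> \<zeta> \<kappa> lam \<mu>"
      and "M1 \<equiv> A1 \<alpha> \<beta> \<gamma> \<delta> \<epsilon> \<zeta> \<kappa> lam \<mu> b c f m"
  shows "(\<forall>p. bform M1 (fst p) (snd p) \<noteq> 0
              \<and> (gvec M0 M1 (fst p))$2 - (gvec M0 M1 (fst p))$3 * snd p \<noteq> 0
              \<and> bform M1 (fst (i2 M0 M1 p)) (snd (i2 M0 M1 p)) \<noteq> 0
           \<longrightarrow> Ifun M0 M1 (i2 M0 M1 p) = Ifun M0 M1 p)
       \<and> (\<forall>p. bform M1 (fst p) (snd p) \<noteq> 0 \<and> hden M0 p \<noteq> 0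
              \<and> bform M1 (fst (hmap M0 p)) (snd (hmap M0 p)) \<noteq> 0
           \<longrightarrow> Ifun M0 M1 (hmap M0 p) = - Ifun M0 M1 p)
       \<and> (\<forall>p. bform M1 (fst p) (snd p) \<noteq> 0 \<and> hden M1 p \<noteq> 0
              \<and> bform M1 (fst (hmap M1 p)) (snd (hmap M1 p)) \<noteq> 0
           \<longrightarrow> Ifun M0 M1 (hmap M1 p) = - Ifun M0 M1 p)"
proof (intro conjI allI impI; elim conjE)
  fix p :: "real \<times> real"
  obtain x y where p: "p = (x, y)" by fastforce
  have apolar: "apolar_form (M0 *v quadvec y) (M1 *v quadvec y) = 0"
    unfolding M0_def M1_def by (rule A0_A1_apolar)
  show "Ifun M0 M1 (i2 M0 M1 p) = Ifun M0 M1 p"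
    if "bform M1 (fst p) (snd p) \<noteq> 0" "(gvec M0 M1 (fst p))$2 - (gvec M0 M1 (fst p))$3 * snd p \<noteq> 0"
       "bform M1 (fst (i2 M0 M1 p)) (snd (i2 M0 M1 p)) \<noteq> 0"
    using that cross3_involution_ratio[of "transpose M0 *v quadvec x" "transpose M1 *v quadvec x" y]
    unfolding p Ifun_def i2_def Let_def fst_conv snd_conv gvec_def bform_transpose by blast
  show "Ifun M0 M1 (hmap M0 p) = - Ifun M0 M1 p"
    if "hden M0 p \<noteq> 0" "bform M1 (fst (hmap M0 p)) (snd (hmap M0 p)) \<noteq> 0"
    using that harmonic_conj_ratio[OF apolar]
    by (simp add: p Ifun_def bform_eq_inner hden_eq hmap_eq)
  show "Ifun M0 M1 (hmap M1 p) = - Ifun M0 M1 p"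
    if "hden M1 p \<noteq> 0" "bform M1 (fst (hmap M1 p)) (snd (hmap M1 p)) \<noteq> 0"
    using that harmonic_conj_ratio'[OF apolar[unfolded apolar_form_commute[of "M0 *v _"]]]
    by (simp add: p Ifun_def bform_eq_inner hden_eq hmap_eq)
qed

end
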